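(* Fix integers $2\le k\le n'\le n$, put $M=\lceil n/n'\rceil$ and $r=n-(M-1)n'$. Consider the $n'$-grouped $(k,n)$ random-grid sharing of a single secret bit $s$ described in the context, and for a valid partition $\vec\lambda=(\lambda_1,\ldots,\lambda_M)$ let $\#C(\vec\lambda)$ be the number of distinct indices among the selected share bits. Let $\varphi$ be a permutation of $\{1,\ldots,M\}$ such that $\varphi(\vec\lambda)=(\lambda_{\varphi(1)},\ldots,\lambda_{\varphi(M)})$ is also a valid partition. Then for every integer $h$ with $1\le h\le k$, $$\Pr(\#C(\vec\lambda)=h)=\Pr(\#C(\varphi(\vec\lambda))=h).$$
   Context: Basic bits: for a secret bit $s\in\{0,1\}$, $b_1,\ldots,b_{k-1}$ are independent uniform bits and $b_k=s\oplus b_1\oplus\cdots\oplus b_{k-1}$. There is a fixed sequence $c=(c_1,\ldots,c_{n'})\in\{1,\ldots,k\}^{n'}$ in which every value $1,\ldots,k$ occurs (the index pattern of the base $(k,n')$ scheme). The $n$ share bits are arranged in $M=\lceil n/n'\rceil$ groups: groups $1,\ldots,M-1$ have $n'$ positions and group $M$ has $r=n-(M-1)n'$ positions. For each group $j$, an independent uniformly random permutation $\sigma_j$ of $\{1,\ldots,n'\}$ is drawn (independent of the $b_i$), and the $\delta$-th position of group $j$ carries the index $c_{\sigma_j(\delta)}$ and the bit $b_{c_{\sigma_j(\delta)}}$ (for group $M$ only $\delta\le r$ is used). The $\delta$-th position of group $j$ is the share bit of shadow image number $(j-1)n'+\delta$. A valid partition (of $t$) is a vector $\vec\lambda=(\lambda_1,\ldots,\lambda_M)$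 of non-negative integers with $\sum_j\lambda_j=t$, $\max_j\lambda_j\le n'$ and $\lambda_M\le r$. Given $\vec\lambda$, one selects $\lambda_j$ positions from group $j$ for each $j$ (fixed positions; equivalently, uniformly at random without replacement, independently across groups); $C(\vec\lambda)$ is the multiset of indices carried by the selected positions and $\#C(\vec\lambda)$ is the number of distinct elements of $C(\vec\lambda)$. Probabilities are over the random permutations (and the random selection if used). *)

theory Defs
  imports Complex_Main "HOL-Combinatorics.Permutations"
begin

text \<open>Tuples (sigma_1, ..., sigma_M) of permutations of {1..n'}; outside {1..M} the
  tuple is fixed to id so that the set is finite and each tuple is counted once.
  The uniform distribution on this set is the product of M independent uniform permutations.\<close>
definition perm_tuples :: "nat \<Rightarrow> nat \<Rightarrow> (nat \<Rightarrow> nat \<Rightarrow> nat) set" where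
  "perm_tuples M n' = {\<sigma>. (\<forall>j\<in>{1..M}. \<sigma> j permutes {1..n'}) \<and> (\<forall>j. j \<notin> {1..M} \<longrightarrow> \<sigma> j = id)}"

text \<open>Number of distinct indices carried by the selected positions: position delta of
  group j carries index c (sigma_j delta); S j is the set of selected positions of group j.\<close>
definition numC :: "(nat \<Rightarrow> nat) \<Rightarrow> nat \<Rightarrow> (nat \<Rightarrow> nat set) \<Rightarrow> (nat \<Rightarrow> nat \<Rightarrow> nat) \<Rightarrow> nat" where
  "numC c M S \<sigma> = card (\<Union>j\<in>{1..M}. (\<lambda>\<delta>. c (\<sigma> j \<delta>)) ` S j)"

definition prob_numC :: "(nat \<Rightarrow> nat) \<Rightarrow> nat \<Rightarrow> nat \<Rightarrow> (nat \<Rightarrow> nat set) \<Rightarrow> nat \<Rightarrow> real" where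
  "prob_numC c M n' S h =
     real (card {\<sigma> \<in> perm_tuples M n'. numC c M S \<sigma> = h}) / real (card (perm_tuples M n'))"

definition valid_partition :: "nat \<Rightarrow> nat \<Rightarrow> nat \<Rightarrow> nat \<Rightarrow> (nat \<Rightarrow> nat) \<Rightarrow> bool" where
  "valid_partition n' M r t lam \<longleftrightarrow>
     (\<Sum>j\<in>{1..M}. lam j) = t \<and> (\<forall>j\<in>{1..M}. lam j \<le> n') \<and> lam M \<le> r"

definition selection :: "nat \<Rightarrow> nat \<Rightarrow> nat \<Rightarrow> (nat \<Rightarrow> nat) \<Rightarrow> (nat \<Rightarrow> nat set) \<Rightarrow> bool" where
  "selection n' M r lam S \<longleftrightarrow>
     (\<forall>j\<in>{1..M}. S j \<subseteq> {1..n'} \<and> card (S j) = lam j) \<and> S M \<subseteq> {1..r}"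

end

theory Submission
  imports Defs
begin

text \<open>For each group \<open>j\<close> pick a permutation \<open>\<tau> j\<close> of \<open>{1..n'}\<close> carrying the positions
  selected by \<open>\<lambda> \<circ> \<phi>\<close> in group \<open>j\<close> onto those selected by \<open>\<lambda>\<close> in group \<open>\<phi> j\<close>; they have
  the same number. The tuple \<open>\<sigma>'\<close> with \<open>\<sigma>' j = \<sigma> (\<phi> j) \<circ> \<tau> j\<close> then reads under the second
  selection exactly the indices that \<open>\<sigma>\<close> reads under the first. The map \<open>\<sigma> \<mapsto> \<sigma>'\<close> is
  injective on the finite set of tuples, hence a bijection, so it matches the events
  \<open>#C(\<lambda>) = h\<close> and \<open>#C(\<phi>(\<lambda>)) = h\<close> one to one. Only the sizes of the selected sets enter.\<close>

lemma permutes_image_eq_exists: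
  fixes U A B :: "'a set"
  assumes "finite U" "A \<subseteq> U" "B \<subseteq> U" "card A = card B"
  shows "\<exists>\<tau>. \<tau> permutes U \<and> \<tau> ` A = B"
proof -
  have "finite A" "finite B" using assms finite_subset by blast+
  then obtain f where f: "bij_betw f A B" using finite_same_card_bij assms(4) by blast
  have "card (U - A) = card (U - B)"
    using assms \<open>finite A\<close> \<open>finite B\<close> by (simp add: card_Diff_subset)
  then obtain g where g: "bij_betw g (U - A) (U - B)"
    using finite_same_card_bij assms(1) by blast
  define h where "h = (\<lambda>x. if x \<in> A then f x else g x)"
  have "bij_betw h (A \<union> (U - A)) (B \<union> (U - B))"
    unfolding h_def by (rule bij_betw_disjoint_Un[OF f g]) auto
  moreover have "A \<union> (U - A) = U" "B \<union> (U - B) = U" using assms by auto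
  ultimately have "restrict_id h U permutes U" by (simp add: permutes_restrict_id)
  moreover have "restrict_id h U ` A = B"
    using f assms(2) by (auto simp: restrict_id_def h_def bij_betw_def)
  ultimately show ?thesis by blast
qed

lemma card_filter_eq_of_inj_endo:
  assumes "finite A" "inj_on F A" "F ` A \<subseteq> A" "\<And>x. x \<in> A \<Longrightarrow> g (F x) = f x"
  shows "card {x \<in> A. f x = h} = card {x \<in> A. g x = h}"
proof (rule bij_betw_same_card)
  have "F ` A = A" using endo_inj_surj assms(1-3) by blast
  then have "F ` {x \<in> A. f x = h} = {x \<in> A. g x = h}"
    using assms(4) by force
  then show "bij_betw F {x \<in> A. f x = h} {x \<in> A. g x = h}"
    using assms(2) by (auto simp: bij_betw_def intro: inj_on_subset)
qed

lemma finite_perm_tuples: "finite (perm_tuples M n')"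
proof -
  let ?P = "PiE {1..M} (\<lambda>_. {p. p permutes {1..n'}})"
  have "inj_on (\<lambda>\<sigma>. restrict \<sigma> {1..M}) (perm_tuples M n')"
  proof (rule inj_onI, rule ext)
    fix \<sigma> \<sigma>' j assume "\<sigma> \<in> perm_tuples M n'" "\<sigma>' \<in> perm_tuples M n'"
      and "restrict \<sigma> {1..M} = restrict \<sigma>' {1..M}"
    then show "\<sigma> j = \<sigma>' j"
      by (cases "j \<in> {1..M}") (auto simp: perm_tuples_def dest: fun_cong[where x = j])
  qed
  moreover have "(\<lambda>\<sigma>. restrict \<sigma> {1..M}) ` perm_tuples M n' \<subseteq> ?P"
    by (auto simp: perm_tuples_def)
  moreover have "finite ?P"
    by (intro finite_PiE) (auto intro: finite_permutations)
  ultimately show ?thesis using finite_imageD finite_subset by blast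
qed

definition regroup ::
    "nat \<Rightarrow> (nat \<Rightarrow> nat) \<Rightarrow> (nat \<Rightarrow> nat \<Rightarrow> nat) \<Rightarrow> (nat \<Rightarrow> nat \<Rightarrow> nat) \<Rightarrow> nat \<Rightarrow> nat \<Rightarrow> nat" where
  "regroup M \<phi> \<tau> \<sigma> j = (if j \<in> {1..M} then \<sigma> (\<phi> j) \<circ> \<tau> j else id)"

lemma regroup_in_perm_tuples:
  assumes "\<phi> permutes {1..M}" "\<And>j. j \<in> {1..M} \<Longrightarrow> \<tau> j permutes {1..n'}"
    and "\<sigma> \<in> perm_tuples M n'"
  shows "regroup M \<phi> \<tau> \<sigma> \<in> perm_tuples M n'"
  using assms permutes_in_image[OF assms(1)]
  by (auto simp: perm_tuples_def regroup_def intro!: permutes_compose)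

lemma inj_on_regroup:
  assumes "\<phi> permutes {1..M}" "\<And>j. j \<in> {1..M} \<Longrightarrow> \<tau> j permutes {1..n'}"
  shows "inj_on (regroup M \<phi> \<tau>) (perm_tuples M n')"
proof (rule inj_onI)
  fix \<sigma> \<sigma>' assume \<sigma>: "\<sigma> \<in> perm_tuples M n'" and \<sigma>': "\<sigma>' \<in> perm_tuples M n'"
    and eq: "regroup M \<phi> \<tau> \<sigma> = regroup M \<phi> \<tau> \<sigma>'"
  have in_groups: "\<sigma> i = \<sigma>' i" if i: "i \<in> {1..M}" for i
  proof -
    obtain j where j: "j \<in> {1..M}" "i = \<phi> j"
      using i permutes_image[OF assms(1)] by blast
    then have "\<sigma> i \<circ> \<tau> j = \<sigma>' i \<circ> \<tau> j"
      using fun_cong[OF eq, of j] by (simp add: regroup_def)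
    then have "\<forall>x \<in> UNIV. (\<sigma> i \<circ> \<tau> j) x = (\<sigma>' i \<circ> \<tau> j) x"
      by simp
    then show ?thesis
      by (rule surj_fun_eq[OF permutes_surj[OF assms(2)[OF j(1)]]])
  qed
  show "\<sigma> = \<sigma>'"
  proof
    fix i show "\<sigma> i = \<sigma>' i"
      using in_groups \<sigma> \<sigma>' by (cases "i \<in> {1..M}") (auto simp: perm_tuples_def)
  qed
qed

lemma numC_regroup:
  assumes "\<phi> permutes {1..M}" "\<And>j. j \<in> {1..M} \<Longrightarrow> \<tau> j ` S' j = S (\<phi> j)"
  shows "numC c M S' (regroup M \<phi> \<tau> \<sigma>) = numC c M S \<sigma>"
proof -
  have "(\<Union>j\<in>{1..M}. (\<lambda>\<delta>. c (regroup M \<phi> \<tau> \<sigma> j \<delta>)) ` S' j)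
      = (\<Union>j\<in>{1..M}. (\<lambda>\<delta>. c (\<sigma> (\<phi> j) \<delta>)) ` S (\<phi> j))"
  proof (rule SUP_cong[OF refl])
    fix j assume "j \<in> {1..M}"
    then have "(\<lambda>\<delta>. c (regroup M \<phi> \<tau> \<sigma> j \<delta>)) ` S' j = (\<lambda>\<delta>. c (\<sigma> (\<phi> j) \<delta>)) ` \<tau> j ` S' j"
      by (simp add: regroup_def image_image)
    with \<open>j \<in> {1..M}\<close> show "(\<lambda>\<delta>. c (regroup M \<phi> \<tau> \<sigma> j \<delta>)) ` S' j = (\<lambda>\<delta>. c (\<sigma> (\<phi> j) \<delta>)) ` S (\<phi> j)"
      using assms(2) by simp
  qed
  also have "\<dots> = (\<Union>i\<in>\<phi> ` {1..M}. (\<lambda>\<delta>. c (\<sigma> i \<delta>)) ` S i)"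
    by (simp add: image_image)
  also have "\<dots> = (\<Union>i\<in>{1..M}. (\<lambda>\<delta>. c (\<sigma> i \<delta>)) ` S i)"
    using permutes_image[OF assms(1)] by simp
  finally show ?thesis by (simp add: numC_def)
qed

lemma prob_numC_regroup_eq:
  assumes "\<phi> permutes {1..M}"
    and "\<And>j. j \<in> {1..M} \<Longrightarrow> S' j \<subseteq> {1..n'} \<and> S (\<phi> j) \<subseteq> {1..n'} \<and> card (S' j) = card (S (\<phi> j))"
  shows "prob_numC c M n' S h = prob_numC c M n' S' h"
proof -
  have "\<forall>j\<in>{1..M}. \<exists>\<tau>. \<tau> permutes {1..n'} \<and> \<tau> ` S' j = S (\<phi> j)"
    using assms(2) by (simp add: permutes_image_eq_exists)
  then obtain \<tau> where \<tau>: "\<And>j. j \<in> {1..M} \<Longrightarrow> \<tau> j permutes {1..n'} \<and> \<tau> j ` S' j = S (\<phi> j)"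
    by metis
  have "card {\<sigma> \<in> perm_tuples M n'. numC c M S \<sigma> = h}
      = card {\<sigma> \<in> perm_tuples M n'. numC c M S' \<sigma> = h}"
  proof (rule card_filter_eq_of_inj_endo[OF finite_perm_tuples])
    show "inj_on (regroup M \<phi> \<tau>) (perm_tuples M n')"
      by (rule inj_on_regroup[OF assms(1)]) (use \<tau> in blast)
    show "regroup M \<phi> \<tau> ` perm_tuples M n' \<subseteq> perm_tuples M n'"
      using \<tau> by (auto intro: regroup_in_perm_tuples[OF assms(1)])
    show "numC c M S' (regroup M \<phi> \<tau> \<sigma>) = numC c M S \<sigma>" for \<sigma>
      by (rule numC_regroup[OF assms(1)]) (use \<tau> in blast)
  qed
  then show ?thesis by (simp add: prob_numC_def)
qed

theorem lemma3:
  fixes k n' n M r t h :: nat and c :: "nat \<Rightarrow> nat"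
    and lam :: "nat \<Rightarrow> nat" and \<phi> :: "nat \<Rightarrow> nat" and S S' :: "nat \<Rightarrow> nat set"
  assumes "2 \<le> k" "k \<le> n'" "n' \<le> n"
    and M_def: "M = nat \<lceil>real n / real n'\<rceil>"
    and r_def: "r = n - (M - 1) * n'"
    and c_vals: "c ` {1..n'} = {1..k}"
    and valid: "valid_partition n' M r t lam"
    and perm: "\<phi> permutes {1..M}"
    and valid_perm: "valid_partition n' M r t (lam \<circ> \<phi>)"
    and sel: "selection n' M r lam S"
    and sel_perm: "selection n' M r (lam \<circ> \<phi>) S'"
    and "1 \<le> h" "h \<le> k"
  shows "prob_numC c M n' S h = prob_numC c M n' S' h"
proof (rule prob_numC_regroup_eq[OF perm])
  fix j assume j: "j \<in> {1..M}"
  then have "\<phi> j \<in> {1..M}" using permutes_in_image[OF perm] by blast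
  then show "S' j \<subseteq> {1..n'} \<and> S (\<phi> j) \<subseteq> {1..n'} \<and> card (S' j) = card (S (\<phi> j))"
    using sel sel_perm j by (auto simp: selection_def)
qed

end
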